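(* Fix $\gamma \geq 1$. Let $A(u,v) = (u,u+v)$, $\mathbf{1} = (1,1)$, $\mathbf{c} = (\gamma,1)$, and define $T:\mathbb{R}^2\to\mathbb{R}^2$ by $$T\mathbf{x} = \begin{cases} A\mathbf{x} + \mathbf{1}, & \langle \mathbf{c},\mathbf{x}\rangle \leq -1/2,\\ A\mathbf{x}, & |\langle \mathbf{c},\mathbf{x}\rangle| < 1/2,\\ A\mathbf{x} - \mathbf{1}, & \langle \mathbf{c},\mathbf{x}\rangle \geq 1/2.\end{cases}$$ Let $V:\mathbb{R}^2\to\mathbb{R}$ be the convex function $V(u,v) = u^2 + |2v - u|$, and let $R = R_1\cup R_2$ with $$R_1 = \{(u,v) : \gamma u + v \geq 0,\ 2v + u \leq 1,\ u \leq 1/2\},\qquad R_2 = \{(u,v) : \gamma u + v < 0,\ 2v + u \geq -1,\ u \geq -1/2\}.$$ If $\mathbf{x}\in\mathbb{R}^2$ satisfies $V(T\mathbf{x}) - V(\mathbf{x}) > 0$, then $\mathbf{x} \in R$. Moreover, $R \subseteq S$, where $S = S^+\cup S^-$ with $S^+ = \{(u,v) : -1/2 \leq \gamma u + v \leq 1/2 + \gamma,\ 0 \leq u < 1\}$ and $S^- = \{(u,v) : -(1/2+\gamma) \leq \gamma u + v \leq 1/2,\ -1 \leq u < 0\}$.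
   Context: $\langle\cdot,\cdot\rangle$ is the standard inner product on $\mathbb{R}^2$. *)

theory Defs
  imports "HOL-Analysis.Analysis"
begin

definition A_map :: "real \<times> real \<Rightarrow> real \<times> real" where
  "A_map x = (fst x, fst x + snd x)"

definition one_vec :: "real \<times> real" where
  "one_vec = (1, 1)"

definition c_vec :: "real \<Rightarrow> real \<times> real" where
  "c_vec \<gamma> = (\<gamma>, 1)"

definition T_map :: "real \<Rightarrow> real \<times> real \<Rightarrow> real \<times> real" where
  "T_map \<gamma> x =
     (if c_vec \<gamma> \<bullet> x \<le> -1/2 then A_map x + one_vec
      else if \<bar>c_vec \<gamma> \<bullet> x\<bar> < 1/2 then A_map x
      else A_map x - one_vec)"

definition V_fun :: "real \<times> real \<Rightarrow> real" where
  "V_fun x = (fst x)^2 + \<bar>2 * snd x - fst x\<bar>"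

definition R1_set :: "real \<Rightarrow> (real \<times> real) set" where
  "R1_set \<gamma> = {(u, v). \<gamma> * u + v \<ge> 0 \<and> 2 * v + u \<le> 1 \<and> u \<le> 1/2}"

definition R2_set :: "real \<Rightarrow> (real \<times> real) set" where
  "R2_set \<gamma> = {(u, v). \<gamma> * u + v < 0 \<and> 2 * v + u \<ge> -1 \<and> u \<ge> -1/2}"

definition R_set :: "real \<Rightarrow> (real \<times> real) set" where
  "R_set \<gamma> = R1_set \<gamma> \<union> R2_set \<gamma>"

definition Splus_set :: "real \<Rightarrow> (real \<times> real) set" where
  "Splus_set \<gamma> = {(u, v). -1/2 \<le> \<gamma> * u + v \<and> \<gamma> * u + v \<le> 1/2 + \<gamma> \<and> 0 \<le> u \<and> u < 1}"

definition Sminus_set :: "real \<Rightarrow> (real \<times> real) set" where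
  "Sminus_set \<gamma> = {(u, v). -(1/2 + \<gamma>) \<le> \<gamma> * u + v \<and> \<gamma> * u + v \<le> 1/2 \<and> -1 \<le> u \<and> u < 0}"

definition S_set :: "real \<Rightarrow> (real \<times> real) set" where
  "S_set \<gamma> = Splus_set \<gamma> \<union> Sminus_set \<gamma>"

end

theory Submission
  imports Defs
begin

text \<open>Write \<open>s = \<gamma> u + v\<close>. Since \<open>2(u + v + t) - (u + t) = u + 2v + t\<close>, the increment of
  \<open>V\<close> along \<open>x \<mapsto> A x + t\<one>\<close> is \<open>2tu + t\<^sup>2 + \<bar>u + 2v + t\<bar> - \<bar>2v - u\<bar>\<close>.
  In the strip \<open>\<bar>s\<bar> < 1/2\<close> (\<open>t = 0\<close>) it is \<open>\<bar>u + 2v\<bar> - \<bar>u - 2v\<bar>\<close>, positive only when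
  \<open>u\<close> and \<open>v\<close> have the same sign, and then \<open>\<gamma> \<ge> 1\<close> and \<open>\<bar>s\<bar> < 1/2\<close> confine \<open>x\<close> to \<open>R\<close>.
  For \<open>s \<le> -1/2\<close> (\<open>t = 1\<close>) the triangle inequality bounds it by \<open>2u + 1 + \<bar>2u + 1\<bar>\<close>
  and, when \<open>u + 2v + 1 \<le> 0\<close>, by \<open>(u - 2v) - \<bar>2v - u\<bar>\<close>, which forces \<open>u > -1/2\<close> and
  \<open>u + 2v > -1\<close>; the case \<open>s \<ge> 1/2\<close> is the same after \<open>x \<mapsto> -x\<close>.
  The inclusion \<open>R \<subseteq> S\<close> is linear once \<open>\<gamma> u\<close> is compared with \<open>u\<close> and with \<open>\<plusminus>\<gamma>/2\<close>.\<close>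

lemma abs_add_gt_abs_diff_iff:
  fixes a b :: "'a :: linordered_idom"
  shows "\<bar>a - b\<bar> < \<bar>a + b\<bar> \<longleftrightarrow> 0 < a * b"
proof -
  have "(a + b)\<^sup>2 - (a - b)\<^sup>2 = 4 * (a * b)"
    by (simp add: power2_eq_square algebra_simps)
  then show ?thesis
    using abs_le_square_iff[of "a + b" "a - b"] by (auto simp: not_le[symmetric])
qed

lemma inner_c_vec: "c_vec \<gamma> \<bullet> (u, v) = \<gamma> * u + v"
  by (simp add: c_vec_def)

lemma V_fun_A_map_shift_increment:
  "V_fun (A_map (u, v) + t *\<^sub>R one_vec) - V_fun (u, v)
     = 2 * t * u + t\<^sup>2 + \<bar>u + 2 * v + t\<bar> - \<bar>2 * v - u\<bar>"
  by (simp add: V_fun_def A_map_def one_vec_def power2_eq_square algebra_simps)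

lemma shift_increment_pos_imp:
  fixes u v :: real
  assumes "0 < 2 * u + 1 + \<bar>u + 2 * v + 1\<bar> - \<bar>2 * v - u\<bar>"
  shows "-1/2 < u" and "-1 < u + 2 * v"
proof -
  have "\<bar>u + 2 * v + 1\<bar> \<le> \<bar>2 * v - u\<bar> + \<bar>2 * u + 1\<bar>"
    using abs_triangle_ineq[of "2 * v - u" "2 * u + 1"] by simp
  with assms show "-1/2 < u"
    by (auto simp: abs_if split: if_splits)
  show "-1 < u + 2 * v"
    using assms by (auto simp: abs_if split: if_splits)
qed

lemma same_sign_in_strip_imp_R_set:
  fixes \<gamma> u v :: real
  assumes "1 \<le> \<gamma>" and "\<bar>\<gamma> * u + v\<bar> < 1/2" and "0 < u * v"
  shows "(u, v) \<in> R_set \<gamma>"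
  using assms(3) unfolding zero_less_mult_iff
proof
  assume pos: "0 < u \<and> 0 < v"
  then have "u \<le> \<gamma> * u"
    using assms(1) by simp
  with pos have "(u, v) \<in> R1_set \<gamma>"
    using assms(2) unfolding R1_set_def by (simp, linarith)
  then show ?thesis
    by (simp add: R_set_def)
next
  assume neg: "u < 0 \<and> v < 0"
  then have "\<gamma> * u \<le> u"
    using assms(1) by (simp add: mult_le_cancel_right1)
  with neg have "(u, v) \<in> R2_set \<gamma>"
    using assms(2) unfolding R2_set_def by (simp, linarith)
  then show ?thesis
    by (simp add: R_set_def)
qed

lemma V_fun_increase_imp_R_set:
  fixes \<gamma> :: real
  assumes "1 \<le> \<gamma>" and increase: "V_fun (T_map \<gamma> x) - V_fun x > 0"
  shows "x \<in> R_set \<gamma>"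
proof -
  obtain u v where x: "x = (u, v)"
    by fastforce
  consider (low) "\<gamma> * u + v \<le> -1/2" | (mid) "\<bar>\<gamma> * u + v\<bar> < 1/2" | (high) "1/2 \<le> \<gamma> * u + v"
    by linarith
  then show ?thesis
  proof cases
    case low
    then have "T_map \<gamma> x = A_map (u, v) + 1 *\<^sub>R one_vec"
      by (simp add: T_map_def x inner_c_vec)
    then have "0 < 2 * u + 1 + \<bar>u + 2 * v + 1\<bar> - \<bar>2 * v - u\<bar>"
      using increase V_fun_A_map_shift_increment[of u v 1] by (simp add: x)
    with low show ?thesis
      using shift_increment_pos_imp by (auto simp: x R_set_def R2_set_def)
  next
    case mid
    then have "T_map \<gamma> x = A_map (u, v) + 0 *\<^sub>R one_vec"
      by (auto simp: T_map_def x inner_c_vec)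
    then have "\<bar>2 * v - u\<bar> < \<bar>2 * v + u\<bar>"
      using increase V_fun_A_map_shift_increment[of u v 0] by (simp add: x add.commute)
    then have "0 < u * v"
      unfolding abs_add_gt_abs_diff_iff by simp
    with mid show ?thesis
      using same_sign_in_strip_imp_R_set assms(1) by (simp add: x)
  next
    case high
    then have "T_map \<gamma> x = A_map (u, v) + (-1) *\<^sub>R one_vec"
      by (auto simp: T_map_def x inner_c_vec)
    then have "0 < 2 * (-u) + 1 + \<bar>(-u) + 2 * (-v) + 1\<bar> - \<bar>2 * (-v) - (-u)\<bar>"
      using increase V_fun_A_map_shift_increment[of u v "-1"]
      by (simp add: x abs_minus_commute)
    with high show ?thesis
      using shift_increment_pos_imp[of "-u" "-v"] by (auto simp: x R_set_def R1_set_def)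
  qed
qed

lemma R_set_subset_S_set:
  fixes \<gamma> :: real
  assumes "1 \<le> \<gamma>"
  shows "R_set \<gamma> \<subseteq> S_set \<gamma>"
proof
  fix x
  assume "x \<in> R_set \<gamma>"
  then obtain u v where x: "x = (u, v)"
    and R: "(0 \<le> \<gamma> * u + v \<and> 2 * v + u \<le> 1 \<and> u \<le> 1/2)
            \<or> (\<gamma> * u + v < 0 \<and> -1 \<le> 2 * v + u \<and> -1/2 \<le> u)"
    by (auto simp: R_set_def R1_set_def R2_set_def)
  have half: "u \<le> 1/2 \<longrightarrow> \<gamma> * u \<le> \<gamma> / 2" and neg_half: "-1/2 \<le> u \<longrightarrow> - \<gamma> / 2 \<le> \<gamma> * u"
    using mult_left_mono[of u "1/2" \<gamma>] mult_left_mono[of "-1/2" u \<gamma>] assms by auto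
  show "x \<in> S_set \<gamma>"
  proof (cases "0 \<le> u")
    case True
    then have "u \<le> \<gamma> * u"
      using assms mult_right_mono[of 1 \<gamma> u] by simp
    with True R half assms
    have "-1/2 \<le> \<gamma> * u + v \<and> \<gamma> * u + v \<le> 1/2 + \<gamma> \<and> u < 1"
      by linarith
    with True show ?thesis
      by (simp add: x S_set_def Splus_set_def)
  next
    case False
    then have "\<gamma> * u \<le> u"
      using assms mult_right_mono_neg[of 1 \<gamma> u] by simp
    with False R neg_half assms
    have "-(1/2 + \<gamma>) \<le> \<gamma> * u + v \<and> \<gamma> * u + v \<le> 1/2 \<and> -1 \<le> u"
      by linarith
    with False show ?thesis
      by (simp add: x S_set_def Sminus_set_def)
  qed
qed

theorem proposition5:
  fixes \<gamma> :: real
  assumes "\<gamma> \<ge> 1"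
  shows "(\<forall>x :: real \<times> real. V_fun (T_map \<gamma> x) - V_fun x > 0 \<longrightarrow> x \<in> R_set \<gamma>)
         \<and> R_set \<gamma> \<subseteq> S_set \<gamma>"
  using V_fun_increase_imp_R_set[OF assms] R_set_subset_S_set[OF assms] by blast

end
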